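(* Let $a$ and $b$ be coprime odd integers and let $\beta$ be a positive integer such that $2^\beta\,\|\,(a+b)$. Then: 1) $G_{(a,b)}(\beta)\neq\emptyset$ and every element of $G_{(a,b)}(\beta)$ is odd; 2) $G_{(a,b)}(\beta+1)=\emptyset$.
   Context: For coprime nonzero integers $a,b$ and an integer $\beta\geq0$, $G_{(a,b)}(\beta)$ is the set of positive integers $d$ such that $2^\beta d\mid(a^k+b^k)$ for some positive integer $k$. $2^\beta\,\|\,m$ means $2^\beta\mid m$ and $2^{\beta+1}\nmid m$. *)

theory Defs
  imports Main
begin

definition G :: "int \<Rightarrow> int \<Rightarrow> nat \<Rightarrow> nat set" where
  "G a b \<beta> = {d :: nat. d > 0 \<and> (\<exists>k::nat. k > 0 \<and> (2::int) ^ \<beta> * int d dvd a ^ k + b ^ k)}"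

end

theory Submission
  imports Defs
begin

text \<open>For odd \<open>a\<close>, \<open>b\<close> and \<open>2\<^sup>\<beta> \<parallel> a + b\<close> with \<open>\<beta> > 0\<close>, no sum \<open>a\<^sup>k + b\<^sup>k\<close> is
  divisible by \<open>2\<^sup>\<beta>\<^sup>+\<^sup>1\<close>. For even \<open>k\<close> the sum is \<open>2\<close> modulo \<open>4\<close>, since odd squares are
  \<open>1\<close> modulo \<open>4\<close>. For odd \<open>k\<close> it factors as \<open>(a + b) S\<close> with \<open>S\<close> a sum of \<open>k\<close> odd terms,
  hence odd, so its \<open>2\<close>-part is that of \<open>a + b\<close>. Thus every \<open>d\<close> with \<open>2\<^sup>\<beta> d\<close> dividing some
  \<open>a\<^sup>k + b\<^sup>k\<close> is odd, \<open>G a b (\<beta> + 1)\<close> is empty, and \<open>k = 1\<close> shows \<open>1 \<in> G a b \<beta>\<close>.\<close>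

lemma power_add_power_odd_eq:
  fixes a b :: "'a::comm_ring_1"
  assumes "odd k"
  shows "a ^ k + b ^ k = (a + b) * (\<Sum>i<k. (- b) ^ (k - Suc i) * a ^ i)"
  using power_diff_sumr2[of a k "- b"] assms by (simp add: power_minus_odd)

lemma odd_power_add_power_cofactor:
  fixes a b :: "'a::ring_parity"
  assumes "odd a" and "odd b" and "odd k"
  shows "odd (\<Sum>i<k. (- b) ^ (k - Suc i) * a ^ i)"
proof -
  have "{i \<in> {..<k}. odd ((- b) ^ (k - Suc i) * a ^ i)} = {..<k}"
    using assms(1,2) by auto
  then show ?thesis
    using assms(3) by (simp add: even_sum_iff)
qed

lemma odd_square_mod_4:
  fixes x :: int
  assumes "odd x"
  shows "x\<^sup>2 mod 4 = 1"
proof -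
  obtain y where "x = 2 * y + 1"
    using assms oddE by blast
  then have square: "x\<^sup>2 = 1 + 4 * (y\<^sup>2 + y)"
    by (simp add: power2_eq_square algebra_simps)
  show ?thesis
    unfolding square by (simp only: mod_mult_self2) simp
qed

lemma power_add_power_even_mod_4:
  fixes a b :: int
  assumes "odd a" and "odd b" and "even k"
  shows "(a ^ k + b ^ k) mod 4 = 2"
proof -
  obtain m where k: "k = 2 * m"
    using assms(3) by blast
  have "x ^ k mod 4 = 1" if "odd x" for x :: int
    using power_mod[of "x\<^sup>2" 4 m] odd_square_mod_4[OF that] by (simp add: k power_mult)
  then show ?thesis
    using assms(1,2) mod_add_eq[of "a ^ k" 4 "b ^ k"] by simp
qed

lemma two_power_Suc_not_dvd_power_add_power:
  fixes a b :: int
  assumes "odd a" and "odd b" and "\<beta> > 0" and "\<not> 2 ^ (\<beta> + 1) dvd a + b"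
  shows "\<not> 2 ^ (\<beta> + 1) dvd a ^ k + b ^ k"
proof (cases "even k")
  case True
  have "(4::int) dvd 2 ^ (\<beta> + 1)"
    using assms(3) le_imp_power_dvd[of 2 "\<beta> + 1" 2] by simp
  moreover have "\<not> 4 dvd a ^ k + b ^ k"
    using power_add_power_even_mod_4[OF assms(1,2) True] by (simp add: dvd_eq_mod_eq_0)
  ultimately show ?thesis
    using dvd_trans by blast
next
  case False
  define S where "S = (\<Sum>i<k. (- b) ^ (k - Suc i) * a ^ i)"
  have "coprime ((2::int) ^ (\<beta> + 1)) S"
    using odd_power_add_power_cofactor[OF assms(1,2) False] by (simp add: S_def)
  then show ?thesis
    using power_add_power_odd_eq[OF False, of a b] assms(4)
    by (simp add: S_def coprime_dvd_mult_left_iff)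
qed

theorem lemma2p14:
  fixes a b :: int and \<beta> :: nat
  assumes "coprime a b" and "odd a" and "odd b" and "\<beta> > 0"
    and "(2::int) ^ \<beta> dvd a + b" and "\<not> (2::int) ^ (\<beta> + 1) dvd a + b"
  shows "G a b \<beta> \<noteq> {} \<and> (\<forall>d \<in> G a b \<beta>. odd d) \<and> G a b (\<beta> + 1) = {}"
proof (intro conjI)
  note no_sum_dvd = two_power_Suc_not_dvd_power_add_power[OF assms(2,3,4,6)]
  have "1 \<in> G a b \<beta>"
    using assms(5) unfolding G_def by (auto intro!: exI[of _ 1])
  then show "G a b \<beta> \<noteq> {}"
    by blast
  show "\<forall>d \<in> G a b \<beta>. odd d"
  proof
    fix d
    assume "d \<in> G a b \<beta>"
    then obtain k where k: "(2::int) ^ \<beta> * int d dvd a ^ k + b ^ k"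
      unfolding G_def by blast
    show "odd d"
    proof
      assume "even d"
      then have "(2::int) ^ (\<beta> + 1) dvd 2 ^ \<beta> * int d"
        by auto
      then show False
        using k no_sum_dvd dvd_trans by blast
    qed
  qed
  show "G a b (\<beta> + 1) = {}"
    using no_sum_dvd unfolding G_def by (auto dest: dvd_mult_left)
qed

end
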